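(* Let $\mathcal{D}$ be a distribution on $\mathbb{R}^d\times\{\pm1\}$ generated by the Massart noise model with noise bound $\eta<1/2$ and target $f(\mathbf{x})=\mathrm{sign}(\langle\mathbf{w}^*,\mathbf{x}\rangle)$, $\mathbf{w}^*\in\mathbb{S}^{d-1}$, whose marginal $\mathcal{D}_{\mathbf{x}}$ is $(U,R)$-bounded. Fix $\theta\in(0,\pi/2)$ and let $\widehat{\mathbf{w}}\in\mathbb{S}^{d-1}$ satisfy $\theta(\widehat{\mathbf{w}},\mathbf{w}^* )\in(\theta,\pi-\theta)$. If $0<\sigma\le\frac{R}{8U}\sqrt{1-2\eta}\,\sin\theta$, then $$\|\nabla_{\mathbf{w}}\mathcal{L}_\sigma(\widehat{\mathbf{w}})\|_2\ge\frac{R^2(1-2\eta)}{32U}.$$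
   Context: $\mathrm{sign}(t)=1$ if $t\ge0$, $-1$ otherwise; $\theta(\cdot,\cdot)\in[0,\pi]$ is the angle between vectors. Massart noise model: there is an unknown measurable $\eta(\cdot):\mathbb{R}^d\to[0,\eta]$; $(\mathbf{x},y)\sim\mathcal{D}$ is produced by drawing $\mathbf{x}\sim\mathcal{D}_{\mathbf{x}}$ and setting $y=f(\mathbf{x})$ with probability $1-\eta(\mathbf{x})$ and $y=-f(\mathbf{x})$ with probability $\eta(\mathbf{x})$. Sigmoid surrogate: $S_\sigma(t)=1/(1+e^{-t/\sigma})$ and, for $\mathbf{w}\ne0$, $\mathcal{L}_\sigma(\mathbf{w})=\mathbb{E}_{(\mathbf{x},y)\sim\mathcal{D}}\big[S_\sigma\big(-y\langle\mathbf{w},\mathbf{x}\rangle/\|\mathbf{w}\|_2\big)\big]$. $(U,R)$-bounded: $\mathcal{D}_{\mathbf{x}}$ is isotropic (zero mean, identity covariance) and for every 2-dimensional subspace $V$ the projection of $\mathcal{D}_{\mathbf{x}}$ onto $V$ has a density $\gamma_V$ with $\gamma_V(\mathbf{x})\ge1/U$ whenever $\|\mathbf{x}\|_2\le R$, and $\gamma_V(\mathbf{x})\le U$ for all $\mathbf{x}\in V$. *)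

theory Defs
  imports "HOL-Probability.Probability"
begin

definition psign :: "real \<Rightarrow> real" where
  "psign t = (if t \<ge> 0 then 1 else -1)"

definition vec_angle :: "'a::real_inner \<Rightarrow> 'a \<Rightarrow> real" where
  "vec_angle u v = arccos ((u \<bullet> v) / (norm u * norm v))"

definition sigmoid :: "real \<Rightarrow> real \<Rightarrow> real" where
  "sigmoid \<sigma> t = 1 / (1 + exp (- t / \<sigma>))"

definition sigmoid_loss :: "('a::euclidean_space \<times> real) measure \<Rightarrow> real \<Rightarrow> 'a \<Rightarrow> real" where
  "sigmoid_loss D \<sigma> w = (\<integral>p. sigmoid \<sigma> (- snd p * (w \<bullet> fst p) / norm w) \<partial>D)"

text \<open>Massart noise model: D is generated from the marginal Dx, target f and a
  measurable noise function eta(.) with values in [0, eta]: x ~ Dx, and y = f x with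
  probability 1 - eta(x), y = - f x with probability eta(x).\<close>
definition massart :: "('a::euclidean_space \<times> real) measure \<Rightarrow> 'a measure \<Rightarrow> ('a \<Rightarrow> real) \<Rightarrow> real \<Rightarrow> bool" where
  "massart D Dx f \<eta> \<longleftrightarrow>
     prob_space D \<and> sets D = sets borel \<and> prob_space Dx \<and> sets Dx = sets borel \<and>
     (\<exists>\<eta>f. \<eta>f \<in> borel_measurable borel \<and> (\<forall>x. 0 \<le> \<eta>f x \<and> \<eta>f x \<le> \<eta>) \<and>
        (\<forall>A \<in> sets borel. emeasure D A =
           (\<integral>\<^sup>+ x. ennreal ((1 - \<eta>f x) * indicator A (x, f x) + \<eta>f x * indicator A (x, - f x)) \<partial>Dx)))"

definition isotropic :: "'a::euclidean_space measure \<Rightarrow> bool" where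
  "isotropic Dx \<longleftrightarrow> prob_space Dx \<and> sets Dx = sets borel \<and>
     (\<forall>v. integrable Dx (\<lambda>x. x \<bullet> v) \<and> (\<integral>x. x \<bullet> v \<partial>Dx) = 0) \<and>
     (\<forall>u v. integrable Dx (\<lambda>x. (x \<bullet> u) * (x \<bullet> v)) \<and> (\<integral>x. (x \<bullet> u) * (x \<bullet> v) \<partial>Dx) = u \<bullet> v)"

text \<open>A 2-dimensional subspace V is described by an orthonormal basis
  u1, u2; the projection onto V is identified isometrically with the map
  x \<mapsto> (x.u1, x.u2) into R^2 (Lebesgue measure lborel on real \<times> real).\<close>
definition UR_bounded :: "'a::euclidean_space measure \<Rightarrow> real \<Rightarrow> real \<Rightarrow> bool" where
  "UR_bounded Dx U R \<longleftrightarrow> isotropic Dx \<and>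
     (\<forall>u1 u2. norm u1 = 1 \<longrightarrow> norm u2 = 1 \<longrightarrow> u1 \<bullet> u2 = 0 \<longrightarrow>
        (\<exists>\<gamma> :: real \<times> real \<Rightarrow> real. \<gamma> \<in> borel_measurable borel \<and>
           distr Dx lborel (\<lambda>x. (x \<bullet> u1, x \<bullet> u2)) = density lborel (\<lambda>z. ennreal (\<gamma> z)) \<and>
           (\<forall>z. norm z \<le> R \<longrightarrow> \<gamma> z \<ge> 1 / U) \<and> (\<forall>z. 0 \<le> \<gamma> z \<and> \<gamma> z \<le> U)))"

end

theory Submission
  imports Defs
begin

text \<open>
  Under Massart noise the loss is an average over the marginal,
  \<open>L\<^sub>\<sigma>(w) = E[\<eta>(x)] + E[(1 - 2\<eta>(x)) S\<^sub>\<sigma>(-f(x) \<langle>w/\<parallel>w\<parallel>, x\<rangle>)]\<close>, so its gradient at the unit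
  vector \<open>what\<close> is the projection onto \<open>what\<^sup>\<bottom>\<close> of the vector \<open>G\<close> with
  \<open>\<langle>G, h\<rangle> = -E[(1 - 2\<eta>(x)) f(x) S'\<^sub>\<sigma>(\<langle>what, x\<rangle>) \<langle>x, h\<rangle>]\<close>.
  Write \<open>wstar = c what + s v\<close> with \<open>v \<bottom> what\<close> a unit vector and \<open>s \<ge> sin \<theta>\<close>. The component
  of the gradient along \<open>v\<close> is an integral against the density \<open>\<gamma>\<close> of \<open>(\<langle>x, what\<rangle>, \<langle>x, v\<rangle>)\<close>.
  On the strip \<open>|z\<^sub>1| \<le> \<sigma>, R/4 \<le> |z\<^sub>2| \<le> 7R/8\<close> the integrand has the sign of \<open>f\<close> and
  size at least \<open>R/(24\<sigma>)\<close>, and \<open>\<gamma> \<ge> 1/U\<close> there, which contributes \<open>5(1 - 2\<eta>)R\<^sup>2/(48U)\<close>.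
  The integrand has the wrong sign only on the wedge between the lines \<open>z\<^sub>2 = 0\<close> and
  \<open>c z\<^sub>1 + s z\<^sub>2 = 0\<close>, where \<open>|z\<^sub>2| \<le> |c/s| |z\<^sub>1|\<close> and \<open>S'\<^sub>\<sigma>(z\<^sub>1) \<le> exp(-|z\<^sub>1|/\<sigma>)/\<sigma>\<close>;
  as \<open>\<gamma> \<le> U\<close>, this costs at most \<open>4U(c/s)\<^sup>2\<sigma>\<^sup>2\<close>, which the bound on \<open>\<sigma>\<close> makes at most
  \<open>(1 - 2\<eta>)R\<^sup>2/(16U)\<close>.
\<close>

section \<open>The sigmoid and its derivative\<close>

lemma one_plus_exp_pos: "0 < 1 + exp (x::real)"
  by (simp add: add_pos_pos)

lemma sigmoid_gt_0: "0 < sigmoid \<sigma> t"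
  unfolding sigmoid_def using one_plus_exp_pos by simp

lemma sigmoid_less_1: "sigmoid \<sigma> t < 1"
  unfolding sigmoid_def using one_plus_exp_pos by (simp add: divide_less_eq)

lemma sigmoid_minus: "sigmoid \<sigma> (- t) = 1 - sigmoid \<sigma> t"
  using one_plus_exp_pos[of "t / \<sigma>"] one_plus_exp_pos[of "- t / \<sigma>"]
  by (simp add: sigmoid_def exp_minus field_simps)

definition dsigmoid :: "real \<Rightarrow> real \<Rightarrow> real" where
  "dsigmoid \<sigma> t = sigmoid \<sigma> t * (1 - sigmoid \<sigma> t) / \<sigma>"

lemma sigmoid_has_real_derivative:
  assumes "\<sigma> \<noteq> 0"
  shows "(sigmoid \<sigma> has_real_derivative dsigmoid \<sigma> t) (at t)"
proof -
  have "((\<lambda>t. inverse (1 + exp (- t / \<sigma>))) has_real_derivative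
         - (exp (- t / \<sigma>) * (- 1 / \<sigma>) * inverse ((1 + exp (- t / \<sigma>))^2))) (at t)"
    using one_plus_exp_pos[of "- t / \<sigma>"] assms
    by (auto intro!: derivative_eq_intros simp: power2_eq_square)
  moreover have "- (exp (- t / \<sigma>) * (- 1 / \<sigma>) * inverse ((1 + exp (- t / \<sigma>))^2)) = dsigmoid \<sigma> t"
    using one_plus_exp_pos[of "- t / \<sigma>"] assms
    by (simp add: dsigmoid_def sigmoid_def field_simps power2_eq_square)
  ultimately show ?thesis
    by (simp add: sigmoid_def[abs_def] divide_inverse)
qed

lemma dsigmoid_has_real_derivative:
  assumes "\<sigma> \<noteq> 0"
  shows "(dsigmoid \<sigma> has_real_derivative dsigmoid \<sigma> t * (1 - 2 * sigmoid \<sigma> t) / \<sigma>) (at t)"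
proof -
  have "((\<lambda>t. sigmoid \<sigma> t * (1 - sigmoid \<sigma> t) / \<sigma>) has_real_derivative
         (dsigmoid \<sigma> t * (1 - sigmoid \<sigma> t) + (0 - dsigmoid \<sigma> t) * sigmoid \<sigma> t) / \<sigma>) (at t)"
    by (intro DERIV_cdivide DERIV_mult DERIV_diff DERIV_const sigmoid_has_real_derivative assms)
  moreover have "(\<lambda>t. sigmoid \<sigma> t * (1 - sigmoid \<sigma> t) / \<sigma>) = dsigmoid \<sigma>"
    by (simp add: dsigmoid_def[abs_def])
  ultimately show ?thesis
    by (auto elim!: DERIV_cong simp: algebra_simps)
qed

lemma dsigmoid_nonneg: "0 < \<sigma> \<Longrightarrow> 0 \<le> dsigmoid \<sigma> t"
  unfolding dsigmoid_def using sigmoid_gt_0[of \<sigma> t] sigmoid_less_1[of \<sigma> t] by simp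

lemma dsigmoid_le: "0 < \<sigma> \<Longrightarrow> dsigmoid \<sigma> t \<le> 1 / (4 * \<sigma>)"
proof -
  assume "0 < \<sigma>"
  moreover have "sigmoid \<sigma> t * (1 - sigmoid \<sigma> t) \<le> 1 / 4"
    using zero_le_power2[of "sigmoid \<sigma> t - 1/2"] by (simp add: power2_eq_square algebra_simps)
  ultimately have "sigmoid \<sigma> t * (1 - sigmoid \<sigma> t) / \<sigma> \<le> (1 / 4) / \<sigma>"
    by (intro divide_right_mono) auto
  then show ?thesis
    by (simp add: dsigmoid_def)
qed

lemma dsigmoid_minus: "dsigmoid \<sigma> (- t) = dsigmoid \<sigma> t"
  unfolding dsigmoid_def sigmoid_minus by (simp add: algebra_simps)

lemma dsigmoid_eq:
  "0 < \<sigma> \<Longrightarrow> dsigmoid \<sigma> t = 1 / (\<sigma> * (exp (t / \<sigma>) + 2 + exp (- t / \<sigma>)))"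
  using one_plus_exp_pos[of "- t / \<sigma>"]
  by (simp add: dsigmoid_def sigmoid_def exp_minus field_simps power2_eq_square)

lemma dsigmoid_ge:
  assumes "0 < \<sigma>" and "\<bar>t\<bar> \<le> \<sigma>"
  shows "1 / (6 * \<sigma>) \<le> dsigmoid \<sigma> t"
proof -
  define u where "u = t / \<sigma>"
  have u: "-1 \<le> u" "u \<le> 1"
    using assms unfolding u_def by (auto simp: divide_simps abs_le_iff)
  have "0 \<le> (exp 1 - exp u) * (1 - exp (-1 - u))"
    using u by (intro mult_nonneg_nonneg) auto
  then have "exp u + exp (- u) \<le> exp 1 + exp (-1)"
    by (simp add: algebra_simps exp_diff exp_minus field_simps)
  also have "\<dots> \<le> 4"
    using e_less_272 exp_le_one_iff[of "-1::real"] by linarith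
  finally have "\<sigma> * (exp u + 2 + exp (- u)) \<le> 6 * \<sigma>"
    using assms(1) by simp
  then show ?thesis
    using assms(1) by (simp add: dsigmoid_eq u_def frac_le add_pos_pos)
qed

lemma dsigmoid_le_exp:
  assumes "0 < \<sigma>"
  shows "dsigmoid \<sigma> t \<le> exp (- \<bar>t\<bar> / \<sigma>) / \<sigma>"
proof -
  have "exp (\<bar>t\<bar> / \<sigma>) \<le> exp (t / \<sigma>) + 2 + exp (- t / \<sigma>)"
    by (cases "0 \<le> t") (auto intro: add_increasing add_increasing2 add_nonneg_nonneg)
  then have "1 / (\<sigma> * (exp (t / \<sigma>) + 2 + exp (- t / \<sigma>))) \<le> 1 / (\<sigma> * exp (\<bar>t\<bar> / \<sigma>))"
    using assms add_pos_pos[OF exp_gt_zero[of "t / \<sigma>"] exp_gt_zero[of "- t / \<sigma>"]]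
    by (intro divide_left_mono mult_left_mono mult_pos_pos) auto
  also have "\<dots> = exp (- \<bar>t\<bar> / \<sigma>) / \<sigma>"
    by (simp add: exp_minus field_simps)
  finally show ?thesis
    by (simp add: dsigmoid_eq[OF assms])
qed

lemma dsigmoid_lipschitz:
  assumes "0 < \<sigma>"
  shows "\<bar>dsigmoid \<sigma> a - dsigmoid \<sigma> b\<bar> \<le> \<bar>a - b\<bar> / \<sigma>^2"
proof -
  have "\<bar>dsigmoid \<sigma> t * (1 - 2 * sigmoid \<sigma> t) / \<sigma>\<bar> \<le> 1 / \<sigma>^2" for t
  proof -
    have "\<bar>1 - 2 * sigmoid \<sigma> t\<bar> \<le> 1"
      using sigmoid_gt_0[of \<sigma> t] sigmoid_less_1[of \<sigma> t] by simp
    then have "\<bar>dsigmoid \<sigma> t * (1 - 2 * sigmoid \<sigma> t)\<bar> \<le> 1 / (4 * \<sigma>) * 1"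
      unfolding abs_mult using assms dsigmoid_nonneg dsigmoid_le by (intro mult_mono) auto
    with assms show ?thesis
      by (simp add: abs_div power2_eq_square divide_simps)
  qed
  then have "norm (dsigmoid \<sigma> a - dsigmoid \<sigma> b) \<le> 1 / \<sigma>^2 * norm (a - b)"
    using assms by (intro field_differentiable_bound[where S = UNIV])
      (auto intro: DERIV_subset dsigmoid_has_real_derivative)
  then show ?thesis
    by simp
qed

lemma sigmoid_taylor_bound:
  assumes "0 < \<sigma>"
  shows "\<bar>sigmoid \<sigma> b - sigmoid \<sigma> a - dsigmoid \<sigma> a * (b - a)\<bar> \<le> (b - a)^2 / \<sigma>^2"
proof -
  let ?g = "\<lambda>t. sigmoid \<sigma> t - dsigmoid \<sigma> a * t"
  have "norm (?g b - ?g a) \<le> \<bar>b - a\<bar> / \<sigma>^2 * norm (b - a)"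
  proof (rule field_differentiable_bound[where S = "closed_segment a b"])
    fix z assume "z \<in> closed_segment a b"
    then have "\<bar>z - a\<bar> / \<sigma>^2 \<le> \<bar>b - a\<bar> / \<sigma>^2"
      using segment_bound1 by (force intro: divide_right_mono)
    then show "norm (dsigmoid \<sigma> z - dsigmoid \<sigma> a) \<le> \<bar>b - a\<bar> / \<sigma>^2"
      using dsigmoid_lipschitz[OF assms, of z a] by simp
  qed (use assms DERIV_diff[OF has_field_derivative_at_within[OF sigmoid_has_real_derivative] DERIV_cmult_Id]
       in auto)
  then show ?thesis
    by (simp add: algebra_simps power2_eq_square flip: abs_mult)
qed

lemma borel_measurable_sigmoid [measurable]: "sigmoid \<sigma> \<in> borel_measurable borel"
  unfolding sigmoid_def[abs_def] by measurable

lemma borel_measurable_dsigmoid [measurable]: "dsigmoid \<sigma> \<in> borel_measurable borel"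
  unfolding dsigmoid_def[abs_def] by measurable

lemma borel_measurable_psign [measurable]: "psign \<in> borel_measurable borel"
  unfolding psign_def[abs_def] by measurable

lemma nn_integral_exp_abs_square_half_line:
  fixes \<sigma> c :: real
  assumes "0 < \<sigma>" and "\<bar>c\<bar> = \<sigma>" and S: "\<And>v. c * v \<in> S \<longleftrightarrow> 0 \<le> v" and "S \<in> sets borel"
  shows "(\<integral>\<^sup>+ t. ennreal (exp (- \<bar>t\<bar> / \<sigma>) / \<sigma> * t^2) * indicator S t \<partial>lborel) = ennreal (2 * \<sigma>^2)"
proof -
  have "ennreal (exp (- \<bar>c * v\<bar> / \<sigma>) / \<sigma> * (c * v)^2) * indicator S (c * v)
      = ennreal \<sigma> * (ennreal (v^2 * exp (- v)) * indicator {0..} v)" for v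
  proof (cases "0 \<le> v")
    case True
    have "- \<bar>c * v\<bar> / \<sigma> = - v"
      using True assms(1,2) by (simp add: abs_mult)
    moreover have "(c * v)^2 = \<sigma>^2 * v^2"
      using assms(2) by (metis power2_abs power_mult_distrib)
    ultimately have "exp (- \<bar>c * v\<bar> / \<sigma>) / \<sigma> * (c * v)^2 = exp (- v) / \<sigma> * (\<sigma>^2 * v^2)"
      by (simp only:)
    also have "\<dots> = \<sigma> * (v^2 * exp (- v))"
      using assms(1) by (simp add: power2_eq_square)
    finally have "ennreal (exp (- \<bar>c * v\<bar> / \<sigma>) / \<sigma> * (c * v)^2) = ennreal \<sigma> * ennreal (v^2 * exp (- v))"
      using assms(1) by (simp add: ennreal_mult)
    then show ?thesis
      using True S[of v] by simp
  qed (use S in simp)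
  then have "(\<integral>\<^sup>+ t. ennreal (exp (- \<bar>t\<bar> / \<sigma>) / \<sigma> * t^2) * indicator S t \<partial>lborel)
      = ennreal \<sigma> * (\<integral>\<^sup>+ v. ennreal \<sigma> * (ennreal (v^2 * exp (- v)) * indicator {0..} v) \<partial>lborel)"
    using nn_integral_real_affine[of "\<lambda>t. ennreal (exp (- \<bar>t\<bar> / \<sigma>) / \<sigma> * t^2) * indicator S t" c 0]
      assms by simp
  also have "\<dots> = ennreal \<sigma> * (ennreal \<sigma> * ennreal 2)"
    by (simp add: nn_integral_cmult nn_intergal_power_times_exp_Ici)
  finally show ?thesis
    using assms(1) by (simp add: ennreal_mult'' power2_eq_square mult_ac)
qed

lemma nn_integral_exp_abs_square_le:
  fixes \<sigma> :: real
  assumes "0 < \<sigma>"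
  shows "(\<integral>\<^sup>+ t. ennreal (exp (- \<bar>t\<bar> / \<sigma>) / \<sigma> * t^2) \<partial>lborel) \<le> ennreal (4 * \<sigma>^2)"
proof -
  let ?F = "\<lambda>t. ennreal (exp (- \<bar>t\<bar> / \<sigma>) / \<sigma> * t^2)"
  have "(\<integral>\<^sup>+ t. ?F t \<partial>lborel) \<le> (\<integral>\<^sup>+ t. ?F t * indicator {0..} t + ?F t * indicator {..0} t \<partial>lborel)"
    by (rule nn_integral_mono) (auto split: split_indicator)
  also have "\<dots> = (\<integral>\<^sup>+ t. ?F t * indicator {0..} t \<partial>lborel) + (\<integral>\<^sup>+ t. ?F t * indicator {..0} t \<partial>lborel)"
    by (rule nn_integral_add) auto
  also have "\<dots> = ennreal (2 * \<sigma>^2) + ennreal (2 * \<sigma>^2)"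
    using nn_integral_exp_abs_square_half_line[OF assms, of \<sigma> "{0..}"]
      nn_integral_exp_abs_square_half_line[OF assms, of "- \<sigma>" "{..0}"] assms
    by (simp add: zero_le_mult_iff mult_le_0_iff)
  also have "\<dots> = ennreal (4 * \<sigma>^2)"
    by (simp flip: ennreal_plus)
  finally show ?thesis .
qed

section \<open>Differentiating integrals of sigmoids\<close>

lemma has_derivative_of_quadratic_remainder:
  fixes F :: "'a::real_normed_vector \<Rightarrow> real"
  assumes "bounded_linear L" and "\<And>v. \<bar>F v - F v0 - L (v - v0)\<bar> \<le> K * (norm (v - v0))^2"
  shows "(F has_derivative L) (at v0)"
  unfolding has_derivative_at_within
proof (intro conjI assms(1), rule Lim_null_comparison)
  have "norm ((F y - F v0 - L (y - v0)) /\<^sub>R norm (y - v0)) \<le> K * norm (y - v0)" for y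
  proof (cases "y = v0")
    case False
    have "norm ((F y - F v0 - L (y - v0)) /\<^sub>R norm (y - v0)) = \<bar>F y - F v0 - L (y - v0)\<bar> / norm (y - v0)"
      by (simp add: abs_mult divide_inverse mult.commute)
    also have "\<dots> \<le> K * (norm (y - v0))^2 / norm (y - v0)"
      using assms(2) by (intro divide_right_mono) auto
    also have "\<dots> = K * norm (y - v0)"
      using False by (simp add: power2_eq_square)
    finally show ?thesis .
  qed simp
  then show "\<forall>\<^sub>F y in at v0. norm ((F y - F v0 - L (y - v0)) /\<^sub>R norm (y - v0)) \<le> K * norm (y - v0)"
    by simp
  show "((\<lambda>y. K * norm (y - v0)) \<longlongrightarrow> 0) (at v0)"
    by (intro tendsto_eq_intros) auto
qed

lemma has_derivative_sgn:
  fixes u :: "'a::real_inner"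
  assumes "norm u = 1"
  shows "(sgn has_derivative (\<lambda>h. h - (u \<bullet> h) *\<^sub>R u)) (at u)"
proof -
  have "u \<noteq> 0"
    using assms by auto
  then have "((\<lambda>w. inverse (norm w) *\<^sub>R w) has_derivative
      (\<lambda>h. inverse (norm u) *\<^sub>R h + (- (inverse (norm u) * (h \<bullet> sgn u) * inverse (norm u))) *\<^sub>R u)) (at u)"
    by (auto intro!: derivative_eq_intros has_derivative_norm)
  moreover have "(\<lambda>w. inverse (norm w) *\<^sub>R w) = sgn"
    by (simp add: fun_eq_iff sgn_div_norm divide_inverse_commute)
  moreover have "(\<lambda>h. inverse (norm u) *\<^sub>R h + (- (inverse (norm u) * (h \<bullet> sgn u) * inverse (norm u))) *\<^sub>R u)
      = (\<lambda>h. h - (u \<bullet> h) *\<^sub>R u)"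
    using assms by (simp add: fun_eq_iff sgn_div_norm inner_commute)
  ultimately show ?thesis
    by metis
qed

lemma weighted_sigmoid_taylor_bound:
  assumes "0 < \<sigma>" "\<bar>a\<bar> \<le> 1" "\<bar>b\<bar> \<le> 1"
  shows "\<bar>a * sigmoid \<sigma> (b * t) - a * sigmoid \<sigma> (b * r) - a * dsigmoid \<sigma> (b * r) * b * (t - r)\<bar>
    \<le> (t - r)^2 / \<sigma>^2"
proof -
  have "\<bar>a * sigmoid \<sigma> (b * t) - a * sigmoid \<sigma> (b * r) - a * dsigmoid \<sigma> (b * r) * b * (t - r)\<bar>
      = \<bar>a\<bar> * \<bar>sigmoid \<sigma> (b * t) - sigmoid \<sigma> (b * r) - dsigmoid \<sigma> (b * r) * (b * t - b * r)\<bar>"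
    by (simp add: algebra_simps flip: abs_mult)
  also have "\<dots> \<le> 1 * ((b * t - b * r)^2 / \<sigma>^2)"
    using assms sigmoid_taylor_bound[OF assms(1)] by (intro mult_mono) auto
  also have "(b * t - b * r)^2 = b^2 * (t - r)^2"
    by (simp add: power_mult_distrib flip: right_diff_distrib)
  also have "\<dots> \<le> (t - r)^2"
    using abs_square_le_1[of b] assms(3) by (intro mult_left_le_one_le) auto
  finally show ?thesis
    by (simp add: divide_right_mono)
qed

lemma inner_representation_of_integral:
  fixes M :: "'a::euclidean_space measure"
  assumes "\<And>h. integrable M (\<lambda>x. c x * (x \<bullet> h))"
  obtains G where "\<And>h. G \<bullet> h = (\<integral>x. c x * (x \<bullet> h) \<partial>M)"
proof
  fix h
  have "(\<Sum>i\<in>Basis. (\<integral>x. c x * (x \<bullet> i) \<partial>M) *\<^sub>R i) \<bullet> h = (\<Sum>i\<in>Basis. (\<integral>x. c x * (x \<bullet> i) * (i \<bullet> h) \<partial>M))"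
    unfolding inner_sum_left by simp
  also have "\<dots> = (\<integral>x. (\<Sum>i\<in>Basis. c x * (x \<bullet> i) * (i \<bullet> h)) \<partial>M)"
    using assms by (intro Bochner_Integration.integral_sum[symmetric]) simp
  also have "\<dots> = (\<integral>x. c x * (x \<bullet> h) \<partial>M)"
  proof (rule Bochner_Integration.integral_cong[OF refl])
    fix x
    have "x \<bullet> h = (\<Sum>i\<in>Basis. (x \<bullet> i) * (h \<bullet> i))"
      by (rule euclidean_inner)
    then show "(\<Sum>i\<in>Basis. c x * (x \<bullet> i) * (i \<bullet> h)) = c x * (x \<bullet> h)"
      by (simp add: sum_distrib_left mult.assoc inner_commute)
  qed
  finally show "(\<Sum>i\<in>Basis. (\<integral>x. c x * (x \<bullet> i) \<partial>M) *\<^sub>R i) \<bullet> h = (\<integral>x. c x * (x \<bullet> h) \<partial>M)" .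
qed

lemma integrable_bounded_times_inner:
  fixes M :: "'a::euclidean_space measure"
  assumes iso: "isotropic M" and "c \<in> borel_measurable M" and "\<And>x. \<bar>c x\<bar> \<le> B"
  shows "integrable M (\<lambda>x. c x * (x \<bullet> h))"
proof (rule Bochner_Integration.integrable_bound[OF integrable_mult_right[where c = B and f = "\<lambda>x. x \<bullet> h"]])
  have "sets M = sets borel"
    using iso by (simp add: isotropic_def)
  then show "(\<lambda>x. c x * (x \<bullet> h)) \<in> borel_measurable M"
    using assms(2) by (simp add: measurable_cong_sets[of M borel M M])
  show "AE x in M. norm (c x * (x \<bullet> h)) \<le> norm (B * (x \<bullet> h))"
  proof (rule AE_I2)
    fix x
    have "\<bar>c x\<bar> * \<bar>x \<bullet> h\<bar> \<le> \<bar>B\<bar> * \<bar>x \<bullet> h\<bar>"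
      using assms(3)[of x] by (intro mult_right_mono) auto
    then show "norm (c x * (x \<bullet> h)) \<le> norm (B * (x \<bullet> h))"
      by (simp add: abs_mult)
  qed
qed (use iso in \<open>simp add: isotropic_def\<close>)

lemma has_derivative_weighted_sigmoid_integral:
  fixes M :: "'a::euclidean_space measure"
  assumes iso: "isotropic M" and "0 < \<sigma>"
    and a: "a \<in> borel_measurable borel" "\<And>x. \<bar>a x\<bar> \<le> 1"
    and b: "b \<in> borel_measurable borel" "\<And>x. \<bar>b x\<bar> \<le> 1"
  obtains G where "((\<lambda>v. \<integral>x. a x * sigmoid \<sigma> (b x * (v \<bullet> x)) \<partial>M) has_derivative (\<lambda>h. G \<bullet> h)) (at v0)"
    and "\<And>h. G \<bullet> h = (\<integral>x. a x * dsigmoid \<sigma> (b x * (v0 \<bullet> x)) * b x * (x \<bullet> h) \<partial>M)"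
proof -
  interpret prob_space M
    using iso by (simp add: isotropic_def)
  have "sets M = sets borel"
    using iso by (simp add: isotropic_def)
  then have meas: "borel_measurable M = borel_measurable borel"
    by (rule measurable_cong_sets) simp
  have int_quad: "integrable M (\<lambda>x. (x \<bullet> u) * (x \<bullet> v))"
    and second_moment: "(\<integral>x. (x \<bullet> u) * (x \<bullet> u) \<partial>M) = u \<bullet> u" for u v
    using iso by (auto simp: isotropic_def)
  define c where "c x = a x * dsigmoid \<sigma> (b x * (v0 \<bullet> x)) * b x" for x
  have c_bound: "\<bar>c x\<bar> \<le> 1 / (4 * \<sigma>)" for x
  proof -
    have "\<bar>c x\<bar> \<le> 1 * (1 / (4 * \<sigma>)) * 1"
      unfolding c_def abs_mult using a(2)[of x] b(2)[of x] \<open>0 < \<sigma>\<close>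
        dsigmoid_le[OF \<open>0 < \<sigma>\<close>, of "b x * (v0 \<bullet> x)"] dsigmoid_nonneg[OF \<open>0 < \<sigma>\<close>, of "b x * (v0 \<bullet> x)"]
      by (intro mult_mono) auto
    then show ?thesis
      by simp
  qed
  have int_c: "integrable M (\<lambda>x. c x * (x \<bullet> h))" for h
    using iso c_bound unfolding c_def
    by (intro integrable_bounded_times_inner) (use a(1) b(1) in \<open>simp_all add: meas\<close>)
  obtain G where G: "\<And>h. G \<bullet> h = (\<integral>x. c x * (x \<bullet> h) \<partial>M)"
    using inner_representation_of_integral[OF int_c] by blast
  let ?F = "\<lambda>v. \<integral>x. a x * sigmoid \<sigma> (b x * (v \<bullet> x)) \<partial>M"
  have int_F: "integrable M (\<lambda>x. a x * sigmoid \<sigma> (b x * (v \<bullet> x)))" for v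
  proof (intro integrable_const_bound[where B = 1] AE_I2)
    show "(\<lambda>x. a x * sigmoid \<sigma> (b x * (v \<bullet> x))) \<in> borel_measurable M"
      unfolding meas using a(1) b(1) by measurable
    fix x
    have "\<bar>a x\<bar> * sigmoid \<sigma> (b x * (v \<bullet> x)) \<le> 1"
      using a(2) sigmoid_gt_0 sigmoid_less_1 by (intro mult_le_one) (auto intro: less_imp_le)
    then show "norm (a x * sigmoid \<sigma> (b x * (v \<bullet> x))) \<le> 1"
      by (simp add: abs_mult abs_of_pos[OF sigmoid_gt_0])
  qed
  have "\<bar>?F v - ?F v0 - G \<bullet> (v - v0)\<bar> \<le> 1 / \<sigma>^2 * (norm (v - v0))^2" for v
  proof -
    let ?d = "v - v0"
    have "?F v - ?F v0 - G \<bullet> ?d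
        = (\<integral>x. a x * sigmoid \<sigma> (b x * (v \<bullet> x)) - a x * sigmoid \<sigma> (b x * (v0 \<bullet> x)) - c x * (x \<bullet> ?d) \<partial>M)"
      unfolding G using int_F int_c by simp
    also have "\<bar>\<dots>\<bar> \<le> (\<integral>x. (x \<bullet> ?d) * (x \<bullet> ?d) / \<sigma>^2 \<partial>M)"
    proof (rule integral_abs_bound_integral)
      show "\<bar>a x * sigmoid \<sigma> (b x * (v \<bullet> x)) - a x * sigmoid \<sigma> (b x * (v0 \<bullet> x)) - c x * (x \<bullet> ?d)\<bar>
          \<le> (x \<bullet> ?d) * (x \<bullet> ?d) / \<sigma>^2" for x
        using weighted_sigmoid_taylor_bound[OF \<open>0 < \<sigma>\<close> a(2) b(2), where t = "v \<bullet> x" and r = "v0 \<bullet> x"]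
        by (simp add: c_def inner_diff_right inner_commute power2_eq_square)
    qed (use int_F int_c int_quad in auto)
    also have "\<dots> = 1 / \<sigma>^2 * (norm ?d)^2"
      using second_moment[of ?d] by (simp add: power2_norm_eq_inner)
    finally show ?thesis .
  qed
  then have "(?F has_derivative (\<lambda>h. G \<bullet> h)) (at v0)"
    by (intro has_derivative_of_quadratic_remainder bounded_linear_inner_right)
  then show ?thesis
    using G unfolding c_def by (rule that)
qed

section \<open>The surrogate loss under Massart noise\<close>

definition massart_noise ::
    "('a::euclidean_space \<times> real) measure \<Rightarrow> 'a measure \<Rightarrow> ('a \<Rightarrow> real) \<Rightarrow> ('a \<Rightarrow> real) \<Rightarrow> bool" where
  "massart_noise D Dx f e \<longleftrightarrow>
     prob_space D \<and> sets D = sets borel \<and> prob_space Dx \<and> sets Dx = sets borel \<and>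
     e \<in> borel_measurable borel \<and>
     (\<forall>A \<in> sets borel. emeasure D A =
        (\<integral>\<^sup>+ x. ennreal ((1 - e x) * indicator A (x, f x) + e x * indicator A (x, - f x)) \<partial>Dx))"

lemma massart_iff_massart_noise:
  "massart D Dx f \<eta> \<longleftrightarrow> (\<exists>e. massart_noise D Dx f e \<and> (\<forall>x. 0 \<le> e x \<and> e x \<le> \<eta>))"
  unfolding massart_def massart_noise_def by blast

lemma measurable_massart_mixture:
  fixes D :: "('a::euclidean_space \<times> real) measure" and u :: "'a \<times> real \<Rightarrow> ennreal"
  assumes sD: "sets D = sets borel" and sDx: "sets Dx = sets borel"
    and "e \<in> borel_measurable borel" "f \<in> borel_measurable borel" and u: "u \<in> borel_measurable D"
  shows "(\<lambda>x. ennreal (1 - e x) * u (x, f x) + ennreal (e x) * u (x, - f x)) \<in> borel_measurable Dx"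
proof -
  have "(\<lambda>x. (x, f x)) \<in> measurable Dx D"
    unfolding measurable_cong_sets[OF sDx sD] borel_prod[symmetric] using assms(4) by measurable
  moreover have "(\<lambda>x. (x, - f x)) \<in> measurable Dx D"
    unfolding measurable_cong_sets[OF sDx sD] borel_prod[symmetric] using assms(4) by measurable
  ultimately have [measurable]: "(\<lambda>x. u (x, f x)) \<in> borel_measurable Dx" "(\<lambda>x. u (x, - f x)) \<in> borel_measurable Dx"
    using measurable_comp[OF _ u] by (simp_all add: comp_def)
  have [measurable]: "e \<in> borel_measurable Dx"
    using assms(3) by (simp add: measurable_cong_sets[OF sDx refl])
  show ?thesis
    by measurable
qed

lemma nn_integral_massart_noise:
  assumes noise: "massart_noise D Dx f e" and e: "\<And>x. 0 \<le> e x" "\<And>x. e x \<le> 1"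
    and f: "f \<in> borel_measurable borel" and g: "g \<in> borel_measurable D"
  shows "(\<integral>\<^sup>+p. g p \<partial>D) = (\<integral>\<^sup>+x. ennreal (1 - e x) * g (x, f x) + ennreal (e x) * g (x, - f x) \<partial>Dx)"
proof -
  have sD: "sets D = sets borel" and sDx: "sets Dx = sets borel" and e_meas: "e \<in> borel_measurable borel"
    and emeasure_D: "\<And>A. A \<in> sets borel \<Longrightarrow> emeasure D A =
      (\<integral>\<^sup>+ x. ennreal ((1 - e x) * indicator A (x, f x) + e x * indicator A (x, - f x)) \<partial>Dx)"
    using noise unfolding massart_noise_def by blast+
  have mixture: "(\<lambda>x. ennreal (1 - e x) * u (x, f x) + ennreal (e x) * u (x, - f x)) \<in> borel_measurable Dx"
    if "u \<in> borel_measurable D" for u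
    using measurable_massart_mixture[OF sD sDx e_meas f that] .
  from g show ?thesis
  proof (induction rule: borel_measurable_induct)
    case (cong f1 f2)
    then show ?case
      using sets_eq_imp_space_eq[OF sD] by (simp add: fun_eq_iff)
  next
    case (set A)
    then have "(\<integral>\<^sup>+p. indicator A p \<partial>D) =
        (\<integral>\<^sup>+ x. ennreal ((1 - e x) * indicator A (x, f x) + e x * indicator A (x, - f x)) \<partial>Dx)"
      using emeasure_D sD by simp
    also have "\<dots> = (\<integral>\<^sup>+x. ennreal (1 - e x) * indicator A (x, f x) + ennreal (e x) * indicator A (x, - f x) \<partial>Dx)"
      using e by (intro nn_integral_cong)
        (simp add: ennreal_plus[symmetric] ennreal_mult[symmetric] ennreal_indicator[symmetric] del: ennreal_plus)
    finally show ?case .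
  next
    case (mult u c)
    then have "(\<integral>\<^sup>+p. c * u p \<partial>D) =
        c * (\<integral>\<^sup>+x. ennreal (1 - e x) * u (x, f x) + ennreal (e x) * u (x, - f x) \<partial>Dx)"
      by (simp add: nn_integral_cmult)
    also have "\<dots> = (\<integral>\<^sup>+x. c * (ennreal (1 - e x) * u (x, f x) + ennreal (e x) * u (x, - f x)) \<partial>Dx)"
      using mixture[OF mult(2)] by (rule nn_integral_cmult[symmetric])
    also have "\<dots> = (\<integral>\<^sup>+x. ennreal (1 - e x) * (c * u (x, f x)) + ennreal (e x) * (c * u (x, - f x)) \<partial>Dx)"
      by (simp add: algebra_simps)
    finally show ?case .
  next
    case (add u v)
    then have "(\<integral>\<^sup>+p. v p + u p \<partial>D) =
        (\<integral>\<^sup>+x. ennreal (1 - e x) * v (x, f x) + ennreal (e x) * v (x, - f x) \<partial>Dx) +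
        (\<integral>\<^sup>+x. ennreal (1 - e x) * u (x, f x) + ennreal (e x) * u (x, - f x) \<partial>Dx)"
      by (simp add: nn_integral_add)
    also have "\<dots> = (\<integral>\<^sup>+x. (ennreal (1 - e x) * v (x, f x) + ennreal (e x) * v (x, - f x)) +
        (ennreal (1 - e x) * u (x, f x) + ennreal (e x) * u (x, - f x)) \<partial>Dx)"
      using mixture add by (intro nn_integral_add[symmetric]) auto
    also have "\<dots> = (\<integral>\<^sup>+x. ennreal (1 - e x) * (v (x, f x) + u (x, f x)) + ennreal (e x) * (v (x, - f x) + u (x, - f x)) \<partial>Dx)"
      by (simp add: algebra_simps)
    finally show ?case .
  next
    case (seq U)
    have mono: "incseq (\<lambda>i. U i p)" for p
      using \<open>incseq U\<close> by (simp add: incseq_def le_fun_def del: split_paired_All)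
    have "(\<integral>\<^sup>+p. (SUP i. U i) p \<partial>D) = (SUP i. (\<integral>\<^sup>+p. U i p \<partial>D))"
      using seq by (simp add: image_comp nn_integral_monotone_convergence_SUP)
    also have "\<dots> = (SUP i. (\<integral>\<^sup>+x. ennreal (1 - e x) * U i (x, f x) + ennreal (e x) * U i (x, - f x) \<partial>Dx))"
      using seq.IH by simp
    also have "\<dots> = (\<integral>\<^sup>+x. (SUP i. ennreal (1 - e x) * U i (x, f x) + ennreal (e x) * U i (x, - f x)) \<partial>Dx)"
      using seq mono mixture by (intro nn_integral_monotone_convergence_SUP[symmetric])
        (auto simp: incseq_def le_fun_def intro!: add_mono mult_left_mono)
    also have "\<dots> = (\<integral>\<^sup>+x. ennreal (1 - e x) * (SUP i. U i) (x, f x) + ennreal (e x) * (SUP i. U i) (x, - f x) \<partial>Dx)"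
      using mono by (intro nn_integral_cong)
        (simp add: ennreal_SUP_add incseq_def mult_left_mono SUP_mult_left_ennreal image_comp)
    finally show ?case .
  qed
qed

lemma sigmoid_loss_massart_noise:
  assumes noise: "massart_noise D Dx f e" and e: "\<And>x. 0 \<le> e x" "\<And>x. e x \<le> 1"
    and f: "f \<in> borel_measurable borel"
  shows "sigmoid_loss D \<sigma> w =
    (\<integral>x. e x \<partial>Dx) + (\<integral>x. (1 - 2 * e x) * sigmoid \<sigma> (- f x * (sgn w \<bullet> x)) \<partial>Dx)"
proof -
  interpret Dx: prob_space Dx
    using noise by (simp add: massart_noise_def)
  have sD: "sets D = sets borel" and sDx: "sets Dx = sets borel" and e_meas: "e \<in> borel_measurable borel"
    using noise unfolding massart_noise_def by blast+
  have measD: "borel_measurable D = borel_measurable borel"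
    and measDx: "borel_measurable Dx = borel_measurable borel"
    using sD sDx by (simp_all cong: measurable_cong_sets)
  define g where "g p = sigmoid \<sigma> (- snd p * (w \<bullet> fst p) / norm w)" for p :: "'a \<times> real"
  have g_meas: "g \<in> borel_measurable borel"
    unfolding g_def[abs_def] borel_prod[symmetric] by measurable
  have g01: "0 \<le> g p" "g p \<le> 1" for p
    unfolding g_def using sigmoid_gt_0 sigmoid_less_1 by (auto intro: less_imp_le)
  define h where "h x = (1 - e x) * g (x, f x) + e x * g (x, - f x)" for x
  have h_meas: "h \<in> borel_measurable borel"
    unfolding h_def[abs_def] using g_meas e_meas f unfolding borel_prod[symmetric] by measurable
  have "sigmoid_loss D \<sigma> w = enn2real (\<integral>\<^sup>+p. ennreal (g p) \<partial>D)"
    unfolding sigmoid_loss_def g_def[symmetric]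
    using g_meas g01 by (intro integral_eq_nn_integral) (auto simp: measD)
  also have "(\<integral>\<^sup>+p. ennreal (g p) \<partial>D) =
      (\<integral>\<^sup>+x. ennreal (1 - e x) * ennreal (g (x, f x)) + ennreal (e x) * ennreal (g (x, - f x)) \<partial>Dx)"
    using g_meas by (intro nn_integral_massart_noise[OF noise e f]) (simp add: measD)
  also have "\<dots> = (\<integral>\<^sup>+x. ennreal (h x) \<partial>Dx)"
    using e g01 unfolding h_def by (intro nn_integral_cong) (simp add: ennreal_mult ennreal_plus)
  also have "enn2real \<dots> = (\<integral>x. h x \<partial>Dx)"
    using h_meas e g01 unfolding h_def
    by (intro integral_eq_nn_integral[symmetric]) (auto simp: measDx)
  also have "\<dots> = (\<integral>x. e x + (1 - 2 * e x) * sigmoid \<sigma> (- f x * (sgn w \<bullet> x)) \<partial>Dx)"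
  proof (rule Bochner_Integration.integral_cong[OF refl])
    fix x
    let ?t = "- f x * (sgn w \<bullet> x)"
    have "- f x * (w \<bullet> x) / norm w = ?t"
      by (simp add: sgn_div_norm divide_inverse mult_ac)
    then have "g (x, f x) = sigmoid \<sigma> ?t" and "g (x, - f x) = 1 - sigmoid \<sigma> ?t"
      unfolding g_def by (simp_all flip: sigmoid_minus)
    then show "h x = e x + (1 - 2 * e x) * sigmoid \<sigma> ?t"
      unfolding h_def by (simp only:) (simp add: algebra_simps)
  qed
  also have "\<dots> = (\<integral>x. e x \<partial>Dx) + (\<integral>x. (1 - 2 * e x) * sigmoid \<sigma> (- f x * (sgn w \<bullet> x)) \<partial>Dx)"
  proof (intro Bochner_Integration.integral_add)
    show "integrable Dx e"
      using e e_meas by (intro Dx.integrable_const_bound[where B = 1]) (auto simp: measDx)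
    have "\<bar>1 - 2 * e x\<bar> * sigmoid \<sigma> (- f x * (sgn w \<bullet> x)) \<le> 1" for x
      using e[of x] sigmoid_gt_0 sigmoid_less_1 by (intro mult_le_one) (auto intro: less_imp_le)
    then show "integrable Dx (\<lambda>x. (1 - 2 * e x) * sigmoid \<sigma> (- f x * (sgn w \<bullet> x)))"
      using e_meas f by (intro Dx.integrable_const_bound[where B = 1])
        (auto simp: measDx abs_mult abs_of_pos[OF sigmoid_gt_0])
  qed
  finally show ?thesis .
qed

lemma sigmoid_loss_gradient:
  assumes noise: "massart_noise D Dx f e" and e: "\<And>x. 0 \<le> e x" "\<And>x. e x \<le> 1"
    and f: "f \<in> borel_measurable borel" "\<And>x. \<bar>f x\<bar> = 1"
    and iso: "isotropic Dx" and u: "norm u = 1" and "0 < \<sigma>"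
  obtains g where "(sigmoid_loss D \<sigma> has_derivative (\<lambda>h. g \<bullet> h)) (at u)"
    and "\<And>h. u \<bullet> h = 0 \<Longrightarrow> g \<bullet> h = - (\<integral>x. (1 - 2 * e x) * f x * dsigmoid \<sigma> (u \<bullet> x) * (x \<bullet> h) \<partial>Dx)"
proof -
  have a: "(\<lambda>x. 1 - 2 * e x) \<in> borel_measurable borel" "\<And>x. \<bar>1 - 2 * e x\<bar> \<le> 1"
    using noise e by (auto simp: massart_noise_def abs_le_iff)
  have b: "(\<lambda>x. - f x) \<in> borel_measurable borel" "\<And>x. \<bar>- f x\<bar> \<le> 1"
    using f by auto
  define \<Phi> where "\<Phi> = (\<lambda>v. \<integral>x. (1 - 2 * e x) * sigmoid \<sigma> (- f x * (v \<bullet> x)) \<partial>Dx)"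
  obtain G where d\<Phi>: "(\<Phi> has_derivative (\<lambda>h. G \<bullet> h)) (at u)"
    and G: "\<And>h. G \<bullet> h = (\<integral>x. (1 - 2 * e x) * dsigmoid \<sigma> (- f x * (u \<bullet> x)) * - f x * (x \<bullet> h) \<partial>Dx)"
    using has_derivative_weighted_sigmoid_integral[OF iso \<open>0 < \<sigma>\<close> a b] unfolding \<Phi>_def by blast
  define g where "g = G - (G \<bullet> u) *\<^sub>R u"
  have "sigmoid_loss D \<sigma> = (\<lambda>w. \<Phi> (sgn w) + (\<integral>x. e x \<partial>Dx))"
    using sigmoid_loss_massart_noise[OF noise e f(1)] by (simp add: \<Phi>_def fun_eq_iff)
  moreover have "((\<lambda>w. \<Phi> (sgn w) + (\<integral>x. e x \<partial>Dx)) has_derivative (\<lambda>h. G \<bullet> (h - (u \<bullet> h) *\<^sub>R u))) (at u)"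
  proof (intro has_derivative_add_const)
    have "(\<Phi> has_derivative (\<lambda>h. G \<bullet> h)) (at (sgn u))"
      using d\<Phi> u by (simp add: sgn_div_norm)
    from has_derivative_compose[OF has_derivative_sgn[OF u] this]
    show "((\<lambda>w. \<Phi> (sgn w)) has_derivative (\<lambda>h. G \<bullet> (h - (u \<bullet> h) *\<^sub>R u))) (at u)" .
  qed
  moreover have "(\<lambda>h. G \<bullet> (h - (u \<bullet> h) *\<^sub>R u)) = (\<lambda>h. g \<bullet> h)"
    by (auto simp: g_def inner_diff_left inner_diff_right inner_commute)
  ultimately have "(sigmoid_loss D \<sigma> has_derivative (\<lambda>h. g \<bullet> h)) (at u)"
    by simp
  moreover have "g \<bullet> h = - (\<integral>x. (1 - 2 * e x) * f x * dsigmoid \<sigma> (u \<bullet> x) * (x \<bullet> h) \<partial>Dx)"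
    if "u \<bullet> h = 0" for h
  proof -
    have "dsigmoid \<sigma> (- f x * (u \<bullet> x)) = dsigmoid \<sigma> (u \<bullet> x)" for x
      using f(2)[of x] by (auto simp: abs_if dsigmoid_minus split: if_splits)
    then have "G \<bullet> h = - (\<integral>x. (1 - 2 * e x) * f x * dsigmoid \<sigma> (u \<bullet> x) * (x \<bullet> h) \<partial>Dx)"
      unfolding G by (simp add: mult_ac)
    with that show ?thesis
      by (simp add: g_def inner_diff_left)
  qed
  ultimately show ?thesis
    by (rule that)
qed

section \<open>Integrals over a two-dimensional projection\<close>

lemma nn_integral_distr_density:
  assumes "\<pi> \<in> measurable M lborel" and "distr M lborel \<pi> = density lborel (\<lambda>z. ennreal (\<gamma> z))"
    and "\<gamma> \<in> borel_measurable borel" and "P \<in> borel_measurable borel"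
  shows "(\<integral>\<^sup>+x. ennreal (P (\<pi> x)) \<partial>M) = (\<integral>\<^sup>+z. ennreal (\<gamma> z) * ennreal (P z) \<partial>lborel)"
proof -
  have "(\<integral>\<^sup>+x. ennreal (P (\<pi> x)) \<partial>M) = (\<integral>\<^sup>+z. ennreal (P z) \<partial>distr M lborel \<pi>)"
    using assms(1,4) by (intro nn_integral_distr[symmetric]) simp_all
  also have "\<dots> = (\<integral>\<^sup>+z. ennreal (\<gamma> z) * ennreal (P z) \<partial>lborel)"
    unfolding assms(2) using assms(3,4) by (intro nn_integral_density) auto
  finally show ?thesis .
qed

lemma nn_integral_lborel_pair:
  fixes G :: "real \<times> real \<Rightarrow> ennreal"
  assumes "G \<in> borel_measurable borel"
  shows "(\<integral>\<^sup>+z. G z \<partial>lborel) = (\<integral>\<^sup>+z1. (\<integral>\<^sup>+z2. G (z1, z2) \<partial>lborel) \<partial>lborel)"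
proof -
  have "(\<integral>\<^sup>+z. G z \<partial>lborel) = (\<integral>\<^sup>+z. G z \<partial>(lborel \<Otimes>\<^sub>M lborel))"
    by (simp add: lborel_prod)
  also have "\<dots> = (\<integral>\<^sup>+z1. (\<integral>\<^sup>+z2. G (z1, z2) \<partial>lborel) \<partial>lborel)"
    using assms by (intro lborel.nn_integral_fst[symmetric]) (simp add: lborel_prod)
  finally show ?thesis .
qed

lemma nn_integral_strip_ge:
  fixes \<gamma> P :: "real \<times> real \<Rightarrow> real"
  assumes \<gamma>: "\<And>z. norm z \<le> R \<Longrightarrow> 1 / U \<le> \<gamma> z" and "0 < U"
    and P: "\<And>z1 z2. \<bar>z1\<bar> \<le> \<sigma> \<Longrightarrow> R / 4 \<le> \<bar>z2\<bar> \<Longrightarrow> \<bar>z2\<bar> \<le> 7 * R / 8 \<Longrightarrow> B \<le> P (z1, z2)"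
    and "0 < \<sigma>" "\<sigma> \<le> R / 8" "0 \<le> B"
  shows "ennreal (B / U * (5 * R / 4) * (2 * \<sigma>)) \<le> (\<integral>\<^sup>+z. ennreal (\<gamma> z) * ennreal (P z) \<partial>lborel)"
proof -
  have "0 < R"
    using assms by simp
  define I where "I = {R / 4 .. 7 * R / 8} \<union> {- (7 * R / 8) .. - (R / 4)}"
  define G where "G z = ennreal (B / U) * indicator ({-\<sigma>..\<sigma>} \<times> I) z" for z :: "real \<times> real"
  have "G z \<le> ennreal (\<gamma> z) * ennreal (P z)" for z
  proof (cases "z \<in> {-\<sigma>..\<sigma>} \<times> I")
    case True
    then obtain z1 z2 where z: "z = (z1, z2)" "\<bar>z1\<bar> \<le> \<sigma>" "R / 4 \<le> \<bar>z2\<bar>" "\<bar>z2\<bar> \<le> 7 * R / 8"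
      using \<open>0 < R\<close> by (cases z) (auto simp: I_def)
    have "z1^2 \<le> (R / 8)^2" "z2^2 \<le> (7 * R / 8)^2"
      using z assms \<open>0 < R\<close> by (auto intro!: power_mono simp flip: abs_le_square_iff)
    then have "64 * z1^2 \<le> R^2" "64 * z2^2 \<le> 49 * R^2"
      by (simp_all add: power_divide power_mult_distrib)
    then have "z1^2 + z2^2 \<le> R^2"
      using zero_le_power2[of R] by linarith
    then have "norm z \<le> R"
      using \<open>0 < R\<close> by (simp add: z norm_Pair real_sqrt_le_iff real_le_lsqrt)
    then have g: "1 / U \<le> \<gamma> z"
      by (rule \<gamma>)
    have p: "B \<le> P z"
      unfolding z(1) using z(2-4) by (rule P)
    have g0: "0 \<le> \<gamma> z"
      using order_trans[OF _ g, of 0] \<open>0 < U\<close> by simp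
    have "1 / U * B \<le> \<gamma> z * P z"
      using mult_mono[OF g p g0 \<open>0 \<le> B\<close>] .
    then have "ennreal (B / U) \<le> ennreal (\<gamma> z) * ennreal (P z)"
      using g0 p \<open>0 \<le> B\<close> by (simp add: ennreal_leI flip: ennreal_mult)
    with True show ?thesis
      by (simp add: G_def)
  qed (simp add: G_def)
  then have "(\<integral>\<^sup>+z. G z \<partial>lborel) \<le> (\<integral>\<^sup>+z. ennreal (\<gamma> z) * ennreal (P z) \<partial>lborel)"
    by (intro nn_integral_mono)
  moreover have "(\<integral>\<^sup>+z. G z \<partial>lborel) = ennreal (B / U * (5 * R / 4) * (2 * \<sigma>))"
  proof -
    have "emeasure lborel I = emeasure lborel {R / 4 .. 7 * R / 8} + emeasure lborel {- (7 * R / 8) .. - (R / 4)}"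
      unfolding I_def using \<open>0 < R\<close> by (intro plus_emeasure[symmetric]) auto
    also have "\<dots> = ennreal (5 * R / 4)"
      using \<open>0 < R\<close> by (simp flip: ennreal_plus)
    finally have box: "emeasure lborel ({-\<sigma>..\<sigma>} \<times> I) = ennreal (2 * \<sigma>) * ennreal (5 * R / 4)"
      using \<open>0 < \<sigma>\<close> by (simp add: I_def lborel_prod[symmetric] lborel.emeasure_pair_measure_Times)
    have "(\<integral>\<^sup>+z. G z \<partial>lborel) = ennreal (B / U) * emeasure lborel ({-\<sigma>..\<sigma>} \<times> I)"
    proof (unfold G_def, rule nn_integral_cmult_indicator)
      show "{-\<sigma>..\<sigma>} \<times> I \<in> sets lborel"
        unfolding sets_lborel borel_prod[symmetric] I_def by (intro pair_measureI) auto
    qed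
    also have "\<dots> = ennreal (B / U * (5 * R / 4) * (2 * \<sigma>))"
      unfolding box using \<open>0 < R\<close> \<open>0 < U\<close> \<open>0 < \<sigma>\<close> \<open>0 \<le> B\<close> by (simp add: mult_ac flip: ennreal_mult)
    finally show ?thesis .
  qed
  ultimately show ?thesis
    by simp
qed

lemma nn_integral_wedge_le:
  fixes \<gamma> N :: "real \<times> real \<Rightarrow> real"
  assumes \<gamma>: "\<And>z. \<gamma> z \<le> U" and "0 \<le> U" and "0 < \<sigma>"
    and N: "\<And>z1 z2. N (z1, z2) \<le>
      (if min 0 (m * z1) \<le> z2 \<and> z2 \<le> max 0 (m * z1) then dsigmoid \<sigma> z1 * \<bar>m * z1\<bar> else 0)"
  shows "(\<integral>\<^sup>+z. ennreal (\<gamma> z) * ennreal (N z) \<partial>lborel) \<le> ennreal (U * m^2 * (4 * \<sigma>^2))"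
proof -
  define H where "H z = (if min 0 (m * fst z) \<le> snd z \<and> snd z \<le> max 0 (m * fst z)
    then dsigmoid \<sigma> (fst z) * \<bar>m * fst z\<bar> else 0)" for z :: "real \<times> real"
  have H_meas: "H \<in> borel_measurable borel"
    unfolding H_def[abs_def] borel_prod[symmetric] by measurable
  have "N z \<le> H z" for z
    using N[of "fst z" "snd z"] by (simp add: H_def)
  then have "(\<integral>\<^sup>+z. ennreal (\<gamma> z) * ennreal (N z) \<partial>lborel) \<le> (\<integral>\<^sup>+z. ennreal U * ennreal (H z) \<partial>lborel)"
    using \<gamma> by (intro nn_integral_mono mult_mono ennreal_leI) auto
  also have "\<dots> = ennreal U * (\<integral>\<^sup>+z1. (\<integral>\<^sup>+z2. ennreal (H (z1, z2)) \<partial>lborel) \<partial>lborel)"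
    using H_meas by (simp add: nn_integral_cmult nn_integral_lborel_pair)
  also have "\<dots> \<le> ennreal U * (\<integral>\<^sup>+z1. ennreal (m^2) * ennreal (exp (- \<bar>z1\<bar> / \<sigma>) / \<sigma> * z1^2) \<partial>lborel)"
  proof (intro mult_left_mono nn_integral_mono)
    fix z1 :: real
    have "(\<integral>\<^sup>+z2. ennreal (H (z1, z2)) \<partial>lborel) =
        ennreal (dsigmoid \<sigma> z1 * \<bar>m * z1\<bar>) * emeasure lborel {min 0 (m * z1) .. max 0 (m * z1)}"
      unfolding H_def by (subst nn_integral_cmult_indicator[symmetric]) (auto intro!: nn_integral_cong split: split_indicator)
    also have "emeasure lborel {min 0 (m * z1) .. max 0 (m * z1)} = ennreal \<bar>m * z1\<bar>"
      by (cases "0 \<le> m * z1") auto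
    also have "ennreal (dsigmoid \<sigma> z1 * \<bar>m * z1\<bar>) * ennreal \<bar>m * z1\<bar> = ennreal (dsigmoid \<sigma> z1 * (m^2 * z1^2))"
      using dsigmoid_nonneg[OF \<open>0 < \<sigma>\<close>, of z1]
      by (simp add: abs_mult_self_eq power_mult_distrib power2_eq_square mult_ac flip: ennreal_mult)
    also have "\<dots> \<le> ennreal (exp (- \<bar>z1\<bar> / \<sigma>) / \<sigma> * (m^2 * z1^2))"
      using dsigmoid_le_exp[OF \<open>0 < \<sigma>\<close>, of z1] by (intro ennreal_leI mult_right_mono) simp_all
    also have "\<dots> = ennreal (m^2) * ennreal (exp (- \<bar>z1\<bar> / \<sigma>) / \<sigma> * z1^2)"
      using \<open>0 < \<sigma>\<close> by (simp add: mult_ac flip: ennreal_mult)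
    finally show "(\<integral>\<^sup>+z2. ennreal (H (z1, z2)) \<partial>lborel) \<le> ennreal (m^2) * ennreal (exp (- \<bar>z1\<bar> / \<sigma>) / \<sigma> * z1^2)" .
  qed simp
  also have "\<dots> \<le> ennreal U * (ennreal (m^2) * ennreal (4 * \<sigma>^2))"
    using nn_integral_exp_abs_square_le[OF \<open>0 < \<sigma>\<close>]
    by (simp add: nn_integral_cmult mult_left_mono)
  also have "\<dots> = ennreal (U * m^2 * (4 * \<sigma>^2))"
    using \<open>0 \<le> U\<close> by (simp add: ennreal_mult mult.assoc)
  finally show ?thesis .
qed

text \<open>
  In the coordinates \<open>z = (\<langle>x, what\<rangle>, \<langle>x, v\<rangle>)\<close> of the plane spanned by \<open>what\<close> and
  \<open>wstar = c what + s v\<close>, this is \<open>f(x) S'\<^sub>\<sigma>(\<langle>what, x\<rangle>) \<langle>x, v\<rangle>\<close> for \<open>f = psign \<langle>wstar, \<cdot>\<rangle>\<close>.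
\<close>
definition plane_integrand :: "real \<Rightarrow> real \<Rightarrow> real \<Rightarrow> real \<times> real \<Rightarrow> real" where
  "plane_integrand c s \<sigma> z = psign (c * fst z + s * snd z) * dsigmoid \<sigma> (fst z) * snd z"

lemma borel_measurable_plane_integrand [measurable]: "plane_integrand c s \<sigma> \<in> borel_measurable borel"
  unfolding plane_integrand_def[abs_def] borel_prod[symmetric] by measurable

lemma abs_plane_integrand_le:
  assumes "0 < \<sigma>"
  shows "\<bar>plane_integrand c s \<sigma> z\<bar> \<le> \<bar>snd z\<bar> / (4 * \<sigma>)"
proof -
  have "\<bar>plane_integrand c s \<sigma> z\<bar> = dsigmoid \<sigma> (fst z) * \<bar>snd z\<bar>"
    using dsigmoid_nonneg[OF assms] by (simp add: plane_integrand_def psign_def abs_mult)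
  also have "\<dots> \<le> 1 / (4 * \<sigma>) * \<bar>snd z\<bar>"
    using dsigmoid_le[OF assms] by (rule mult_right_mono) simp
  finally show ?thesis
    by simp
qed

lemma plane_integrand_ge:
  assumes "\<bar>c\<bar> \<le> 1" "0 < s" "0 < \<sigma>" "8 * \<sigma> \<le> R * s" "\<bar>z1\<bar> \<le> \<sigma>" "R / 4 \<le> \<bar>z2\<bar>"
  shows "R / (24 * \<sigma>) \<le> plane_integrand c s \<sigma> (z1, z2)"
proof -
  have "\<bar>c * z1\<bar> \<le> 1 * \<sigma>"
    unfolding abs_mult using assms by (intro mult_mono) auto
  then have cz: "- \<sigma> \<le> c * z1" "c * z1 \<le> \<sigma>"
    by auto
  have "s * (R / 4) \<le> s * \<bar>z2\<bar>"
    using assms by (intro mult_left_mono) auto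
  then have sz: "2 * \<sigma> \<le> s * \<bar>z2\<bar>"
    using assms(4) by (simp add: mult.commute)
  have "psign (c * z1 + s * z2) * z2 = \<bar>z2\<bar>"
  proof (cases "0 \<le> z2")
    case True
    with cz sz have "0 \<le> c * z1 + s * z2"
      by simp
    with True show ?thesis
      by (simp add: psign_def)
  next
    case False
    with cz sz \<open>0 < \<sigma>\<close> have "\<not> 0 \<le> c * z1 + s * z2"
      by simp
    with False show ?thesis
      by (simp add: psign_def)
  qed
  then have "plane_integrand c s \<sigma> (z1, z2) = dsigmoid \<sigma> z1 * \<bar>z2\<bar>"
    by (simp add: plane_integrand_def mult_ac)
  moreover have "0 < R"
    using assms(2-4) by (smt (verit) mult_nonpos_nonneg)
  then have "1 / (6 * \<sigma>) * (R / 4) \<le> dsigmoid \<sigma> z1 * \<bar>z2\<bar>"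
    using assms dsigmoid_ge[of \<sigma> z1] dsigmoid_nonneg[of \<sigma> z1] by (intro mult_mono) auto
  ultimately show ?thesis
    by simp
qed

lemma plane_integrand_neg_part_le:
  assumes "0 < s" "0 < \<sigma>" "s * m = - c"
  shows "max (- plane_integrand c s \<sigma> (z1, z2)) 0 \<le>
    (if min 0 (m * z1) \<le> z2 \<and> z2 \<le> max 0 (m * z1) then dsigmoid \<sigma> z1 * \<bar>m * z1\<bar> else 0)"
    (is "_ \<le> ?wedge")
proof -
  have d: "0 \<le> dsigmoid \<sigma> z1"
    using dsigmoid_nonneg[OF assms(2)] .
  have sm: "c * z1 + s * z2 = s * (z2 - m * z1)"
    using assms(3) by (simp add: algebra_simps flip: mult.assoc)
  have "0 \<le> ?wedge"
    using d by simp
  moreover have "- plane_integrand c s \<sigma> (z1, z2) \<le> ?wedge"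
  proof (cases "0 \<le> z2 - m * z1")
    case True
    then have Q: "- plane_integrand c s \<sigma> (z1, z2) = dsigmoid \<sigma> z1 * - z2"
      using assms(1) sm by (simp add: plane_integrand_def psign_def)
    show ?thesis
    proof (cases "0 \<le> z2")
      case True
      then have "- plane_integrand c s \<sigma> (z1, z2) \<le> 0"
        using Q d by (simp add: mult_nonneg_nonpos)
      with \<open>0 \<le> ?wedge\<close> show ?thesis
        by linarith
    next
      case False
      with \<open>0 \<le> z2 - m * z1\<close> have "- z2 \<le> \<bar>m * z1\<bar>" and "min 0 (m * z1) \<le> z2 \<and> z2 \<le> max 0 (m * z1)"
        by auto
      moreover from this(1) have "dsigmoid \<sigma> z1 * - z2 \<le> dsigmoid \<sigma> z1 * \<bar>m * z1\<bar>"
        using d by (rule mult_left_mono)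
      ultimately show ?thesis
        using Q by simp
    qed
  next
    case False
    then have Q: "- plane_integrand c s \<sigma> (z1, z2) = dsigmoid \<sigma> z1 * z2"
      using assms(1) sm by (simp add: plane_integrand_def psign_def zero_le_mult_iff)
    show ?thesis
    proof (cases "z2 \<le> 0")
      case True
      then have "- plane_integrand c s \<sigma> (z1, z2) \<le> 0"
        using Q d by (simp add: mult_nonneg_nonpos)
      with \<open>0 \<le> ?wedge\<close> show ?thesis
        by linarith
    next
      case False
      with \<open>\<not> 0 \<le> z2 - m * z1\<close> have "z2 \<le> \<bar>m * z1\<bar>" and "min 0 (m * z1) \<le> z2 \<and> z2 \<le> max 0 (m * z1)"
        by auto
      moreover from this(1) have "dsigmoid \<sigma> z1 * z2 \<le> dsigmoid \<sigma> z1 * \<bar>m * z1\<bar>"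
        using d by (rule mult_left_mono)
      ultimately show ?thesis
        using Q by simp
    qed
  qed
  ultimately show ?thesis
    by simp
qed

lemma integrable_dominated_by_plane_integrand:
  assumes "integrable M (\<lambda>x. snd (\<pi> x))" and "0 < \<sigma>"
    and "g \<in> borel_measurable M" and "\<And>x. \<bar>g x\<bar> \<le> \<bar>plane_integrand c s \<sigma> (\<pi> x)\<bar>"
  shows "integrable M g"
proof (rule Bochner_Integration.integrable_bound[OF integrable_mult_right[OF integrable_abs[OF assms(1)]]])
  show "AE x in M. norm (g x) \<le> norm (1 / (4 * \<sigma>) * \<bar>snd (\<pi> x)\<bar>)"
  proof (rule AE_I2)
    fix x
    have "\<bar>g x\<bar> \<le> \<bar>snd (\<pi> x)\<bar> / (4 * \<sigma>)"
      using assms(4)[of x] abs_plane_integrand_le[OF \<open>0 < \<sigma>\<close>, of c s "\<pi> x"] by linarith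
    then show "norm (g x) \<le> norm (1 / (4 * \<sigma>) * \<bar>snd (\<pi> x)\<bar>)"
      using \<open>0 < \<sigma>\<close> by simp
  qed
qed (rule assms(3))

lemma integral_plane_integrand_pos_part_ge:
  assumes \<pi>: "\<pi> \<in> measurable M lborel" and dens: "distr M lborel \<pi> = density lborel (\<lambda>z. ennreal (\<gamma> z))"
    and \<gamma>: "\<gamma> \<in> borel_measurable borel" "\<And>z. norm z \<le> R \<Longrightarrow> 1 / U \<le> \<gamma> z"
    and "integrable M (\<lambda>x. snd (\<pi> x))" and "0 < U" "0 < R"
    and "\<bar>c\<bar> \<le> 1" "0 < s" "s \<le> 1" "0 < \<sigma>" "8 * \<sigma> \<le> R * s"
  shows "5 * R^2 / (48 * U) \<le> (\<integral>x. max (plane_integrand c s \<sigma> (\<pi> x)) 0 \<partial>M)"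
proof -
  let ?P = "\<lambda>z. max (plane_integrand c s \<sigma> z) 0"
  have "\<sigma> \<le> R / 8"
    using \<open>8 * \<sigma> \<le> R * s\<close> \<open>0 < R\<close> \<open>s \<le> 1\<close> mult_left_le[of s R] by linarith
  have "ennreal (R / (24 * \<sigma>) / U * (5 * R / 4) * (2 * \<sigma>)) \<le> (\<integral>\<^sup>+z. ennreal (\<gamma> z) * ennreal (?P z) \<partial>lborel)"
  proof (rule nn_integral_strip_ge[OF \<gamma>(2) \<open>0 < U\<close>])
    show "R / (24 * \<sigma>) \<le> ?P (z1, z2)" if "\<bar>z1\<bar> \<le> \<sigma>" "R / 4 \<le> \<bar>z2\<bar>" "\<bar>z2\<bar> \<le> 7 * R / 8" for z1 z2
      using plane_integrand_ge[OF \<open>\<bar>c\<bar> \<le> 1\<close> \<open>0 < s\<close> \<open>0 < \<sigma>\<close> \<open>8 * \<sigma> \<le> R * s\<close> that(1,2)] by simp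
  qed (use \<open>0 < \<sigma>\<close> \<open>\<sigma> \<le> R / 8\<close> \<open>0 < R\<close> in auto)
  also have "\<dots> = (\<integral>\<^sup>+x. ennreal (?P (\<pi> x)) \<partial>M)"
    using \<pi> dens \<gamma>(1) by (intro nn_integral_distr_density[symmetric]) auto
  also have "\<dots> = ennreal (\<integral>x. ?P (\<pi> x) \<partial>M)"
  proof (rule nn_integral_eq_integral)
    have [measurable]: "\<pi> \<in> borel_measurable M"
      using \<pi> by simp
    show "integrable M (\<lambda>x. ?P (\<pi> x))"
      using assms(5) \<open>0 < \<sigma>\<close> by (rule integrable_dominated_by_plane_integrand[where c = c and s = s]) auto
  qed simp
  finally show ?thesis
    using \<open>0 < \<sigma>\<close> by (simp add: ennreal_le_iff power2_eq_square field_simps)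
qed

lemma integral_plane_integrand_neg_part_le:
  assumes \<pi>: "\<pi> \<in> measurable M lborel" and dens: "distr M lborel \<pi> = density lborel (\<lambda>z. ennreal (\<gamma> z))"
    and \<gamma>: "\<gamma> \<in> borel_measurable borel" "\<And>z. 0 \<le> \<gamma> z \<and> \<gamma> z \<le> U"
    and "integrable M (\<lambda>x. snd (\<pi> x))" and "0 < s" "0 < \<sigma>"
  shows "(\<integral>x. max (- plane_integrand c s \<sigma> (\<pi> x)) 0 \<partial>M) \<le> U * (c / s)^2 * (4 * \<sigma>^2)"
proof -
  let ?N = "\<lambda>z. max (- plane_integrand c s \<sigma> z) 0"
  define m where "m = - c / s"
  have "0 \<le> U"
    using \<gamma>(2)[of 0] by linarith
  have [measurable]: "\<pi> \<in> borel_measurable M"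
    using \<pi> by simp
  have "integrable M (\<lambda>x. ?N (\<pi> x))"
    using assms(5) \<open>0 < \<sigma>\<close> by (rule integrable_dominated_by_plane_integrand[where c = c and s = s]) auto
  then have "ennreal (\<integral>x. ?N (\<pi> x) \<partial>M) = (\<integral>\<^sup>+x. ennreal (?N (\<pi> x)) \<partial>M)"
    by (intro nn_integral_eq_integral[symmetric]) auto
  also have "\<dots> = (\<integral>\<^sup>+z. ennreal (\<gamma> z) * ennreal (?N z) \<partial>lborel)"
    using \<pi> dens \<gamma>(1) by (intro nn_integral_distr_density) auto
  also have "\<dots> \<le> ennreal (U * m^2 * (4 * \<sigma>^2))"
  proof (rule nn_integral_wedge_le)
    have "s * m = - c"
      using \<open>0 < s\<close> by (simp add: m_def)
    from plane_integrand_neg_part_le[OF \<open>0 < s\<close> \<open>0 < \<sigma>\<close> this]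
    show "?N (z1, z2) \<le>
      (if min 0 (m * z1) \<le> z2 \<and> z2 \<le> max 0 (m * z1) then dsigmoid \<sigma> z1 * \<bar>m * z1\<bar> else 0)" for z1 z2 .
  qed (use \<gamma>(2) \<open>0 \<le> U\<close> \<open>0 < \<sigma>\<close> in auto)
  finally show ?thesis
    using \<open>0 \<le> U\<close> by (simp add: ennreal_le_iff m_def power2_eq_square)
qed

lemma small_sigma_bounds:
  assumes "1 \<le> U" "0 < R" "0 < s" "0 \<le> \<kappa>" "\<kappa> \<le> 1" "\<bar>c\<bar> \<le> 1" "0 < \<sigma>"
    and \<sigma>: "\<sigma> \<le> R / (8 * U) * sqrt \<kappa> * s"
  shows "8 * \<sigma> \<le> R * s" and "U * (c / s)^2 * (4 * \<sigma>^2) \<le> R^2 * \<kappa> / (16 * U)"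
proof -
  have "R / (8 * U) * sqrt \<kappa> * s \<le> R / 8 * 1 * s"
    using assms by (intro mult_right_mono mult_mono divide_left_mono) auto
  with \<sigma> show "8 * \<sigma> \<le> R * s"
    by simp
  have "(c / s)^2 * \<sigma>^2 \<le> 1 / s^2 * ((R / (8 * U))^2 * \<kappa> * s^2)"
  proof (rule mult_mono)
    show "(c / s)^2 \<le> 1 / s^2"
      using abs_le_square_iff[of c 1] \<open>\<bar>c\<bar> \<le> 1\<close> unfolding power_divide by (intro divide_right_mono) auto
    have "\<sigma>^2 \<le> (R / (8 * U) * sqrt \<kappa> * s)^2"
      using \<sigma> \<open>0 < \<sigma>\<close> by (intro power_mono) auto
    then show "\<sigma>^2 \<le> (R / (8 * U))^2 * \<kappa> * s^2"
      by (simp only: power_mult_distrib real_sqrt_pow2[OF \<open>0 \<le> \<kappa>\<close>])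
  qed auto
  then show "U * (c / s)^2 * (4 * \<sigma>^2) \<le> R^2 * \<kappa> / (16 * U)"
    using \<open>0 < s\<close> \<open>1 \<le> U\<close> by (simp add: field_simps power2_eq_square)
qed

lemma integral_plane_integrand_ge:
  fixes Dx :: "'a::euclidean_space measure"
  assumes "UR_bounded Dx U R" "0 < U" "0 < R"
    and uv: "norm u = 1" "norm v = 1" "u \<bullet> v = 0"
    and a: "a \<in> borel_measurable borel" "\<And>x. \<kappa> \<le> a x" "\<And>x. a x \<le> 1" and "0 \<le> \<kappa>"
    and "\<bar>c\<bar> \<le> 1" "0 < s" "s \<le> 1" "0 < \<sigma>"
    and \<sigma>: "\<sigma> \<le> R / (8 * U) * sqrt \<kappa> * s"
  shows "R^2 * \<kappa> / (32 * U) \<le> (\<integral>x. a x * plane_integrand c s \<sigma> (x \<bullet> u, x \<bullet> v) \<partial>Dx)"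
proof -
  define \<pi> where "\<pi> x = (x \<bullet> u, x \<bullet> v)" for x
  let ?Q = "plane_integrand c s \<sigma>"
  obtain \<gamma> :: "real \<times> real \<Rightarrow> real" where \<gamma>: "\<gamma> \<in> borel_measurable borel"
    "distr Dx lborel \<pi> = density lborel (\<lambda>z. ennreal (\<gamma> z))"
    "\<And>z. norm z \<le> R \<Longrightarrow> 1 / U \<le> \<gamma> z" "\<And>z. 0 \<le> \<gamma> z \<and> \<gamma> z \<le> U"
    using assms(1) uv unfolding UR_bounded_def \<pi>_def[abs_def] by blast
  have iso: "isotropic Dx"
    using assms(1) by (simp add: UR_bounded_def)
  then have sets_Dx: "sets Dx = sets borel" and snd_int: "integrable Dx (\<lambda>x. snd (\<pi> x))"
    by (auto simp: isotropic_def \<pi>_def)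
  have \<pi>_meas: "\<pi> \<in> measurable Dx lborel"
    unfolding measurable_cong_sets[OF sets_Dx sets_lborel] \<pi>_def[abs_def] borel_prod[symmetric] by measurable
  have a_meas: "a \<in> borel_measurable Dx"
    using a(1) by (simp add: measurable_cong_sets[OF sets_Dx refl])
  have "1 / U \<le> U"
    using \<gamma>(3,4)[of 0] \<open>0 < R\<close> by fastforce
  then have "1 \<le> U"
    using \<open>0 < U\<close>
    by (metis less_le_not_le mult_less_cancel_right1 not_le_imp_less order.trans mult_le_cancel_right1 divide_le_eq)
  have "\<kappa> \<le> 1"
    using a(2,3)[of 0] by linarith
  note \<sigma>_bounds = small_sigma_bounds[OF \<open>1 \<le> U\<close> \<open>0 < R\<close> \<open>0 < s\<close> \<open>0 \<le> \<kappa>\<close> \<open>\<kappa> \<le> 1\<close> \<open>\<bar>c\<bar> \<le> 1\<close> \<open>0 < \<sigma>\<close> \<sigma>]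
  have pos: "5 * R^2 / (48 * U) \<le> (\<integral>x. max (?Q (\<pi> x)) 0 \<partial>Dx)"
    using integral_plane_integrand_pos_part_ge[OF \<pi>_meas \<gamma>(2,1,3) snd_int] assms(2,3) assms(11-14)
      \<sigma>_bounds(1) by blast
  from \<sigma>_bounds(2) integral_plane_integrand_neg_part_le[OF \<pi>_meas \<gamma>(2,1,4) snd_int \<open>0 < s\<close> \<open>0 < \<sigma>\<close>, where c = c]
  have neg: "(\<integral>x. max (- ?Q (\<pi> x)) 0 \<partial>Dx) \<le> R^2 * \<kappa> / (16 * U)"
    by linarith
  have [measurable]: "\<pi> \<in> borel_measurable Dx"
    using \<pi>_meas by simp
  have int: "integrable Dx g" if "g \<in> borel_measurable Dx" "\<And>x. \<bar>g x\<bar> \<le> \<bar>?Q (\<pi> x)\<bar>" for g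
    using snd_int \<open>0 < \<sigma>\<close> that by (rule integrable_dominated_by_plane_integrand)
  have int_P: "integrable Dx (\<lambda>x. max (?Q (\<pi> x)) 0)" and int_N: "integrable Dx (\<lambda>x. max (- ?Q (\<pi> x)) 0)"
    by (rule int; auto)+
  have int_Q: "integrable Dx (\<lambda>x. a x * ?Q (\<pi> x))"
  proof (rule int)
    show "\<bar>a x * ?Q (\<pi> x)\<bar> \<le> \<bar>?Q (\<pi> x)\<bar>" for x
      using a(2,3)[of x] \<open>0 \<le> \<kappa>\<close> unfolding abs_mult by (intro mult_left_le_one_le) auto
  qed (use a_meas in measurable)
  have "\<kappa> * max (?Q (\<pi> x)) 0 - max (- ?Q (\<pi> x)) 0 \<le> a x * ?Q (\<pi> x)" for x
    using a(2,3)[of x] \<open>0 \<le> \<kappa>\<close> by (cases "0 \<le> ?Q (\<pi> x)") (auto intro: mult_right_mono mult_right_mono_neg)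
  then have "(\<integral>x. \<kappa> * max (?Q (\<pi> x)) 0 - max (- ?Q (\<pi> x)) 0 \<partial>Dx) \<le> (\<integral>x. a x * ?Q (\<pi> x) \<partial>Dx)"
    using int_P int_N int_Q by (intro integral_mono) auto
  then have "\<kappa> * (\<integral>x. max (?Q (\<pi> x)) 0 \<partial>Dx) - (\<integral>x. max (- ?Q (\<pi> x)) 0 \<partial>Dx) \<le> (\<integral>x. a x * ?Q (\<pi> x) \<partial>Dx)"
    using int_P int_N by simp
  moreover have "\<kappa> * (5 * R^2 / (48 * U)) \<le> \<kappa> * (\<integral>x. max (?Q (\<pi> x)) 0 \<partial>Dx)"
    using pos \<open>0 \<le> \<kappa>\<close> by (rule mult_left_mono)
  moreover have "R^2 * \<kappa> / (32 * U) \<le> \<kappa> * (5 * R^2 / (48 * U)) - R^2 * \<kappa> / (16 * U)"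
    using \<open>0 < U\<close> \<open>0 \<le> \<kappa>\<close> by (simp add: field_simps)
  ultimately show ?thesis
    using neg unfolding \<pi>_def by linarith
qed

section \<open>The plane of the two directions\<close>

lemma abs_inner_less_cos_of_vec_angle:
  fixes u w :: "'a::real_inner"
  assumes "norm u = 1" "norm w = 1" "0 < \<theta>" "\<theta> < vec_angle u w" "vec_angle u w < pi - \<theta>"
  shows "\<bar>u \<bullet> w\<bar> < cos \<theta>"
proof -
  have c: "\<bar>u \<bullet> w\<bar> \<le> 1"
    using Cauchy_Schwarz_ineq2[of u w] assms by simp
  then have angle: "vec_angle u w = arccos (u \<bullet> w)" "0 \<le> arccos (u \<bullet> w)" "arccos (u \<bullet> w) \<le> pi"
    using assms by (auto simp: vec_angle_def intro: arccos_lbound arccos_ubound)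
  have "cos (arccos (u \<bullet> w)) < cos \<theta>"
    using assms angle by (intro cos_monotone_0_pi) auto
  moreover have "cos (pi - \<theta>) < cos (arccos (u \<bullet> w))"
    using assms angle by (intro cos_monotone_0_pi) auto
  ultimately show ?thesis
    using c by auto
qed

lemma unit_vector_decomposition:
  fixes u w :: "'a::real_inner"
  assumes "norm u = 1" "norm w = 1" "\<bar>u \<bullet> w\<bar> < cos \<theta>" "0 < \<theta>" "\<theta> < pi / 2"
  obtains v s where "norm v = 1" "u \<bullet> v = 0" "w = (u \<bullet> w) *\<^sub>R u + s *\<^sub>R v" "sin \<theta> \<le> s" "s \<le> 1"
proof -
  define c where "c = u \<bullet> w"
  define s where "s = sqrt (1 - c^2)"
  have "0 < sin \<theta>" "0 < cos \<theta>"
    using assms(4,5) by (auto intro!: sin_gt_zero cos_gt_zero)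
  have "\<bar>c\<bar>^2 < (cos \<theta>)^2"
    using assms(3) unfolding c_def by (intro power_strict_mono) auto
  moreover have "(sin \<theta>)^2 = 1 - (cos \<theta>)^2"
    by (simp add: sin_squared_eq)
  ultimately have "(sin \<theta>)^2 \<le> 1 - c^2" "0 \<le> 1 - c^2"
    using zero_le_power2[of "sin \<theta>"] by (simp_all add: power2_abs)
  then have s: "sin \<theta> \<le> s" "s \<le> 1" "s^2 = 1 - c^2"
    unfolding s_def by (auto intro: real_le_rsqrt)
  then have "0 < s"
    using \<open>0 < sin \<theta>\<close> by linarith
  define v where "v = (1 / s) *\<^sub>R (w - c *\<^sub>R u)"
  have uu: "u \<bullet> u = 1" and ww: "w \<bullet> w = 1"
    using assms(1,2) by (simp_all add: dot_square_norm)
  have "u \<bullet> v = 0"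
    unfolding v_def c_def by (simp add: inner_diff_right uu)
  moreover have "w = c *\<^sub>R u + s *\<^sub>R v"
    unfolding v_def using \<open>0 < s\<close> by simp
  moreover have "v \<bullet> v = 1"
  proof -
    have "(w - c *\<^sub>R u) \<bullet> (w - c *\<^sub>R u) = s^2"
      using uu ww s(3) by (simp add: inner_diff_left inner_diff_right inner_commute c_def power2_eq_square)
    then show ?thesis
      unfolding v_def using \<open>0 < s\<close> by (simp add: power2_eq_square)
  qed
  then have "norm v = 1"
    by (simp add: norm_eq_sqrt_inner)
  ultimately show ?thesis
    using that s(1,2) unfolding c_def by blast
qed

lemma sigmoid_loss_gradient_norm_ge:
  fixes D :: "('a::euclidean_space \<times> real) measure"
  assumes noise: "massart_noise D Dx (\<lambda>x. psign (wstar \<bullet> x)) e"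
    and e: "\<And>x. 0 \<le> e x" "\<And>x. e x \<le> \<eta>" and "\<eta> < 1/2"
    and UR: "UR_bounded Dx U R" "0 < U" "0 < R"
    and v: "norm what = 1" "norm v = 1" "what \<bullet> v = 0" "wstar = c *\<^sub>R what + s *\<^sub>R v"
    and "\<bar>c\<bar> \<le> 1" "0 < s" "s \<le> 1" "0 < \<sigma>" "\<sigma> \<le> R / (8 * U) * sqrt (1 - 2 * \<eta>) * s"
  shows "\<exists>g. (sigmoid_loss D \<sigma> has_derivative (\<lambda>h. g \<bullet> h)) (at what) \<and>
    R^2 * (1 - 2 * \<eta>) / (32 * U) \<le> norm g"
proof -
  define f where "f = (\<lambda>x. psign (wstar \<bullet> x))"
  have e1: "e x \<le> 1" for x
    using e(2)[of x] \<open>\<eta> < 1/2\<close> by linarith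
  have f: "f \<in> borel_measurable borel" "\<And>x. \<bar>f x\<bar> = 1"
    by (auto simp: f_def psign_def)
  obtain g where dL: "(sigmoid_loss D \<sigma> has_derivative (\<lambda>h. g \<bullet> h)) (at what)"
    and grad: "\<And>h. what \<bullet> h = 0 \<Longrightarrow> g \<bullet> h = - (\<integral>x. (1 - 2 * e x) * f x * dsigmoid \<sigma> (what \<bullet> x) * (x \<bullet> h) \<partial>Dx)"
    using sigmoid_loss_gradient[OF noise[folded f_def] e(1) e1 f _ v(1) \<open>0 < \<sigma>\<close>] UR(1)
    by (auto simp: UR_bounded_def)
  have "f x = psign (c * (what \<bullet> x) + s * (v \<bullet> x))" for x
    unfolding f_def by (subst v(4)) (simp add: inner_add_left)
  then have integrand: "(1 - 2 * e x) * f x * dsigmoid \<sigma> (what \<bullet> x) * (x \<bullet> v) =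
      (1 - 2 * e x) * plane_integrand c s \<sigma> (x \<bullet> what, x \<bullet> v)" for x
    by (simp add: plane_integrand_def inner_commute[of x what] inner_commute[of x v])
  have a: "(\<lambda>x. 1 - 2 * e x) \<in> borel_measurable borel" "1 - 2 * \<eta> \<le> 1 - 2 * e x" "1 - 2 * e x \<le> 1"
    for x
    using noise e(1,2)[of x] by (auto simp: massart_noise_def)
  have "0 \<le> 1 - 2 * \<eta>"
    using \<open>\<eta> < 1/2\<close> by simp
  from integral_plane_integrand_ge[OF UR v(1-3) a this assms(12-16)]
  have "R^2 * (1 - 2 * \<eta>) / (32 * U) \<le> (\<integral>x. (1 - 2 * e x) * plane_integrand c s \<sigma> (x \<bullet> what, x \<bullet> v) \<partial>Dx)" .
  also have "\<dots> = - (g \<bullet> v)"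
    using grad[OF v(3)] unfolding integrand by simp
  also have "\<dots> \<le> norm g"
    using Cauchy_Schwarz_ineq2[of g v] v(2) by simp
  finally show ?thesis
    using dL by auto
qed

theorem lemma3p3:
  fixes D :: "('a::euclidean_space \<times> real) measure" and Dx :: "'a measure"
    and \<eta> U R \<theta> \<sigma> :: real and wstar what :: 'a
  assumes "0 \<le> \<eta>" and "\<eta> < 1/2"
    and "norm wstar = 1"
    and "massart D Dx (\<lambda>x. psign (wstar \<bullet> x)) \<eta>"
    and "0 < U" and "0 < R" and "UR_bounded Dx U R"
    and "0 < \<theta>" and "\<theta> < pi/2"
    and "norm what = 1"
    and "\<theta> < vec_angle what wstar" and "vec_angle what wstar < pi - \<theta>"
    and "0 < \<sigma>" and "\<sigma> \<le> R / (8 * U) * sqrt (1 - 2 * \<eta>) * sin \<theta>"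
  shows "\<exists>g. (sigmoid_loss D \<sigma> has_derivative (\<lambda>h. g \<bullet> h)) (at what) \<and>
             norm g \<ge> R^2 * (1 - 2 * \<eta>) / (32 * U)"
proof -
  obtain e where noise: "massart_noise D Dx (\<lambda>x. psign (wstar \<bullet> x)) e" and e: "\<And>x. 0 \<le> e x" "\<And>x. e x \<le> \<eta>"
    using assms(4) unfolding massart_iff_massart_noise by blast
  have "\<bar>what \<bullet> wstar\<bar> < cos \<theta>"
    using abs_inner_less_cos_of_vec_angle assms(3,8,10-12) by blast
  then obtain v s where v: "norm v = 1" "what \<bullet> v = 0" "wstar = (what \<bullet> wstar) *\<^sub>R what + s *\<^sub>R v"
    and s: "sin \<theta> \<le> s" "s \<le> 1"
    using unit_vector_decomposition assms(3,8,9,10) by blast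
  have "\<bar>what \<bullet> wstar\<bar> \<le> 1"
    using Cauchy_Schwarz_ineq2[of what wstar] assms(3,10) by simp
  moreover have "0 < s"
    using s(1) sin_gt_zero[of \<theta>] assms(8,9) by linarith
  moreover have "R / (8 * U) * sqrt (1 - 2 * \<eta>) * sin \<theta> \<le> R / (8 * U) * sqrt (1 - 2 * \<eta>) * s"
    using s(1) assms(2,5,6) by (intro mult_left_mono) auto
  ultimately show ?thesis
    using sigmoid_loss_gradient_norm_ge[OF noise e assms(2,7,5,6,10) v] s(2) assms(13,14) by auto
qed

end
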